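(* Let $n$ be a positive integer and let $x,y,z$ be complex numbers with $x+y+z=1$. Then $$\sum_{k=0}^n\binom{n+1}k\left((-1)^nB_k(x)-B_k(y)\right)E_{n-k}(z)=\frac{n+1}2\sum_{l=0}^{n-1}(-1)^lE_l(x)E_{n-1-l}(y),$$ $$\sum_{k=1}^n\binom nk\frac{B_k(x)}kE_{n-k}(z)-\sum_{k=1}^n(-1)^k\frac{B_k(y)}kE_{n-k}(z)=\frac{(-1)^n}2\sum_{l=0}^{n-1}\binom nlE_l(y)E_{n-1-l}(x)-H_nE_n(z),$$ and $$(-1)^n\sum_{k=0}^n\binom{n+1}kB_{n-k}(x)B_k(y)+\sum_{k=0}^{n-1}\binom {n+1}k\frac{B_{n-k}(x)}{n-k}B_k(z)=(n+1)\sum_{k=1}^n(-1)^k\frac{B_k(y)}kB_{n-k}(z)+(1-H_n)(n+1)B_n(z).$$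
   Context: $H_n=1+\frac12+\cdots+\frac1n$. Bernoulli numbers are defined by $B_0=1$ and $\sum_{k=0}^n\binom{n+1}kB_k=0$ for $n\ge1$; Euler numbers by $E_0=1$ and $\sum_{0\le k\le n,\,2\mid n-k}\binom nkE_k=0$ for $n\ge1$. The Bernoulli polynomials are $B_n(x)=\sum_{k=0}^n\binom nkB_kx^{n-k}$ and the Euler polynomials are $E_n(x)=\sum_{k=0}^n\binom nk\frac{E_k}{2^k}(x-\frac12)^{n-k}$. *)

theory Defs
  imports "HOL-Analysis.Analysis"
begin

text \<open>Bernoulli numbers: B_0 = 1 and sum_{k=0}^n binom(n+1,k) B_k = 0 for n >= 1,
  i.e. B_n = -(1/(n+1)) sum_{k<n} binom(n+1,k) B_k.\<close>
function bern :: "nat \<Rightarrow> complex" where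
  "bern n = (if n = 0 then 1
     else - (\<Sum>k<n. of_nat ((n + 1) choose k) * bern k) / of_nat (n + 1))"
  by auto
termination by (relation "Wellfounded.measure id") auto

declare bern.simps [simp del]

function eul :: "nat \<Rightarrow> complex" where
  "eul n = (if n = 0 then 1
     else - (\<Sum>k\<in>{k. k < n \<and> even (n - k)}. of_nat (n choose k) * eul k))"
  by auto
termination by (relation "Wellfounded.measure id") auto

declare eul.simps [simp del]

definition bernpoly :: "nat \<Rightarrow> complex \<Rightarrow> complex" where
  "bernpoly n x = (\<Sum>k\<le>n. of_nat (n choose k) * bern k * x ^ (n - k))"

definition eulpoly :: "nat \<Rightarrow> complex \<Rightarrow> complex" where
  "eulpoly n x = (\<Sum>k\<le>n. of_nat (n choose k) * (eul k / 2 ^ k) * (x - 1/2) ^ (n - k))"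

end

(* Sun and Pan's identity: for r + s + t = n and x + y + z = 1,
     r [s,t;x,y]_n + s [t,r;y,z]_n + t [r,s;z,x]_n = 0,
   where [a,b;u,v]_n = sum_k (-1)^k C(a,k) C(b,n-k) B_{n-k}(u) B_k(v); and its analogue mixing
   Bernoulli and Euler polynomials. As B and E are Appell
   sequences, the derivative of the degree-n expression along the plane x + y + z = 1 is, after a
   Pascal-type rule for C(a,k), a multiple of the degree-(n-1) expression with one parameter
   lowered by 1; so by induction the expression is constant on the plane. The constant is 0
   because the values at two corners of the plane differ only by terms that vanish by
   B_j(1) = B_j(0) (j <> 1), E_j(1) = -E_j(0) (j > 0), B_j = 0 (odd j > 1) and E_j(0) = 0
   (even j > 0); in the Bernoulli case the corners are compared one degree higher, which shows
   that the constant is killed by s + 1 and, by symmetry, by r + 1 and t + 1.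

   The first formula of the theorem is the mixed identity at (r,s,t) = (n+1,-1,-1). The other two
   are obtained by differentiating the identities in r at r = 0 along (r, n-r, -1), resp.
   (r, n+1-r, -1): the derivative of C(a,k) in a is (-1)^(k-1)/k at a = 0 and C(N,k)(H_N - H_(N-k))
   at a = N, which produces the factors 1/k and the harmonic numbers. *)

theory Submission
  imports Defs
begin

lemma sum_atMost_reflect: "(\<Sum>k\<le>n. f k) = (\<Sum>k\<le>n. f (n - k))" for n :: nat
  by (rule sum.reindex_bij_witness [of _ "\<lambda>k. n - k" "\<lambda>k. n - k"]) auto

lemma sum_atMost_split_0: "(\<Sum>k\<le>n. f k) = f 0 + (\<Sum>k=1..n. f k)" for n :: nat
  using sum.atLeast_Suc_atMost [of 0 n f] by (simp add: atLeast0AtMost)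

lemma diff_eq_of_add_diff_eq_0: "a + b - c = 0 \<Longrightarrow> c - b = (a :: 'a :: ab_group_add)"
  by (simp add: algebra_simps)

lemma harm_0 [simp]: "harm 0 = 0"
  by (simp add: harm_def)

lemma has_field_derivative_const_slope:
  fixes g :: "'a :: real_normed_field \<Rightarrow> 'a"
  assumes "\<And>x. (g has_field_derivative K) (at x)"
  shows "g b - g a = K * (b - a)"
proof -
  have "\<exists>c. \<forall>x\<in>UNIV. g x - K * x = c"
    using assms by (intro has_field_derivative_zero_constant) (auto intro!: derivative_eq_intros)
  then obtain c where "\<And>x. g x - K * x = c" by blast
  from this [of a] this [of b] show ?thesis by (simp add: algebra_simps)
qed

lemma has_field_derivative_0_imp_eq:
  fixes g :: "'a :: real_normed_field \<Rightarrow> 'a"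
  assumes "\<And>x. (g has_field_derivative 0) (at x)"
  shows "g a = g b"
  using has_field_derivative_const_slope [of g 0 a b] assms by simp

lemma has_field_derivative_vanishing:
  fixes f :: "'a :: real_normed_field \<Rightarrow> 'a"
  assumes "(f has_field_derivative D) (at x)" and "\<And>r. f r = 0"
  shows "D = 0"
proof -
  have "f = (\<lambda>r. 0)" using assms(2) by auto
  then show ?thesis using DERIV_unique [OF assms(1)] DERIV_const by auto
qed

section \<open>Derivatives of generalized binomial coefficients\<close>

lemma gbinomial_minus_one: "((-1 :: 'a :: field_char_0) gchoose k) = (-1) ^ k"
  using gbinomial_minus [of "1 :: 'a" k] by (simp flip: binomial_gbinomial)

lemma gbinomial_Suc_rec:
  "(a gchoose Suc k) = (a gchoose k) * (a - of_nat k) / (of_nat (Suc k) :: 'a :: field_char_0)"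
proof -
  have "of_nat (Suc k) * (a gchoose Suc k) = (a - of_nat k) * (a gchoose k)"
    using gbinomial_absorption [of k a] gbinomial_absorb_comp [of a k] by simp
  then show ?thesis by (simp add: field_simps del: of_nat_Suc)
qed

fun gchoose_deriv :: "nat \<Rightarrow> complex \<Rightarrow> complex" where
  "gchoose_deriv 0 a = 0"
| "gchoose_deriv (Suc k) a = (gchoose_deriv k a * (a - of_nat k) + (a gchoose k)) / of_nat (Suc k)"

lemma has_field_derivative_gchoose:
  "((\<lambda>a. a gchoose k) has_field_derivative gchoose_deriv k a) (at a)"
proof (induction k arbitrary: a)
  case (Suc k)
  have "((\<lambda>a. (a gchoose k) * (a - of_nat k) / of_nat (Suc k)) has_field_derivative
      (gchoose_deriv k a * (a - of_nat k) + (a gchoose k) * 1) / of_nat (Suc k)) (at a)"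
    by (rule DERIV_cdivide [OF DERIV_mult' [OF Suc.IH DERIV_diff [OF DERIV_ident DERIV_const]], THEN DERIV_cong])
       (simp add: algebra_simps)
  then show ?case by (simp add: gbinomial_Suc_rec)
qed simp

lemma gchoose_deriv_at_0: "k \<noteq> 0 \<Longrightarrow> gchoose_deriv k 0 = (-1) ^ (k - 1) / of_nat k"
proof (induction k)
  case (Suc k)
  then show ?case
    by (cases k) (simp_all add: field_simps del: of_nat_Suc)
qed simp

lemma gchoose_deriv_of_nat:
  "k \<le> N \<Longrightarrow> gchoose_deriv k (of_nat N) = of_nat (N choose k) * (harm N - harm (N - k))"
proof (induction k)
  case (Suc k)
  then have "k < N" by simp
  define d :: complex where "d = of_nat (N - k)"
  have "d \<noteq> 0" using \<open>k < N\<close> by (simp add: d_def)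
  have binom: "of_nat (Suc k) * of_nat (N choose Suc k) = d * of_nat (N choose k)"
    using binomial_absorption [of k N] binomial_absorb_comp [of N k] unfolding d_def by (metis of_nat_mult)
  have harm: "harm (N - k) = harm (N - Suc k) + inverse d"
    using harm_Suc [of "N - Suc k"] \<open>k < N\<close> by (simp add: Suc_diff_Suc d_def)
  have "gchoose_deriv (Suc k) (of_nat N)
      = (of_nat (N choose k) * (harm N - harm (N - k)) * d + of_nat (N choose k)) / of_nat (Suc k)"
    using Suc \<open>k < N\<close> by (simp add: d_def binomial_gbinomial of_nat_diff del: of_nat_Suc)
  also have "of_nat (N choose k) * (harm N - harm (N - k)) * d + of_nat (N choose k)
      = d * of_nat (N choose k) * (harm N - harm (N - Suc k))"
    using \<open>d \<noteq> 0\<close> unfolding harm by (simp add: field_simps)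
  also have "d * of_nat (N choose k) * (harm N - harm (N - Suc k)) / of_nat (Suc k)
      = of_nat (N choose Suc k) * (harm N - harm (N - Suc k))"
    unfolding binom [symmetric] by (simp del: of_nat_Suc)
  finally show ?case .
qed simp

section \<open>Appell sequences and binomial convolutions\<close>

lemma binomial_polynomial_has_field_derivative:
  fixes a :: "nat \<Rightarrow> complex"
  shows "((\<lambda>x. \<Sum>k\<le>m. of_nat (m choose k) * a k * (x - c) ^ (m - k)) has_field_derivative
     of_nat m * (\<Sum>k\<le>m - 1. of_nat ((m - 1) choose k) * a k * (x - c) ^ (m - 1 - k))) (at x)"
proof -
  have "((\<lambda>x. \<Sum>k\<le>m. of_nat (m choose k) * a k * (x - c) ^ (m - k)) has_field_derivative
     (\<Sum>k\<le>m. of_nat (m choose k) * a k * (of_nat (m - k) * (x - c) ^ (m - k - 1)))) (at x)"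
    by (auto intro!: DERIV_sum derivative_eq_intros)
  moreover have "(\<Sum>k\<le>m. of_nat (m choose k) * a k * (of_nat (m - k) * (x - c) ^ (m - k - 1)))
      = of_nat m * (\<Sum>k\<le>m - 1. of_nat ((m - 1) choose k) * a k * (x - c) ^ (m - 1 - k))"
  proof (cases m)
    case (Suc m')
    have absorb: "of_nat (m choose k) * a k * (of_nat (m - k) * (x - c) ^ (m - k - 1))
        = of_nat m * (of_nat (m' choose k) * a k * (x - c) ^ (m' - k))" for k
    proof -
      have "(m - k) * (m choose k) = m * (m' choose k)"
        using binomial_absorb_comp [of m k] Suc by simp
      then have "of_nat (m choose k) * (of_nat (m - k) :: complex) = of_nat m * of_nat (m' choose k)"
        by (metis mult.commute of_nat_mult)
      moreover have "m - k - 1 = m' - k" using Suc by simp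
      ultimately show ?thesis by (metis (no_types, lifting) mult.assoc mult.left_commute)
    qed
    have "(\<Sum>k\<le>m'. of_nat (m choose k) * a k * (of_nat (m - k) * (x - c) ^ (m - k - 1)))
        = of_nat m * (\<Sum>k\<le>m'. of_nat (m' choose k) * a k * (x - c) ^ (m' - k))"
      by (simp only: absorb sum_distrib_left)
    then show ?thesis
      using Suc by (simp add: sum.atMost_Suc del: of_nat_Suc)
  qed simp
  ultimately show ?thesis by simp
qed

definition appell_seq :: "(nat \<Rightarrow> complex \<Rightarrow> complex) \<Rightarrow> bool" where
  "appell_seq P \<longleftrightarrow> (\<forall>m x. (P m has_field_derivative of_nat m * P (m - 1) x) (at x))"

lemma appell_seq_has_field_derivative_comp:
  assumes "appell_seq P" and "(u has_field_derivative du) (at y)"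
  shows "((\<lambda>y. P m (u y)) has_field_derivative of_nat m * P (m - 1) (u y) * du) (at y)"
  using DERIV_chain2 [of "P m" _ u y du UNIV] assms by (simp add: appell_seq_def)

definition binom_conv ::
    "(nat \<Rightarrow> complex \<Rightarrow> complex) \<Rightarrow> (nat \<Rightarrow> complex \<Rightarrow> complex) \<Rightarrow> nat \<Rightarrow>
     complex \<Rightarrow> complex \<Rightarrow> complex \<Rightarrow> complex \<Rightarrow> complex" where
  "binom_conv P Q n a b u v = (\<Sum>k\<le>n. (-1) ^ k * (a gchoose k) * (b gchoose (n - k)) * P (n - k) u * Q k v)"

lemma binom_conv_0 [simp]: "binom_conv P Q 0 a b u v = P 0 u * Q 0 v"
  by (simp add: binom_conv_def)

lemma binom_conv_1: "binom_conv P Q (Suc 0) a b u v = b * P (Suc 0) u * Q 0 v - a * P 0 u * Q (Suc 0) v"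
  by (simp add: binom_conv_def)

lemma binom_conv_absorb_first:
  "(\<Sum>k\<le>Suc m. (-1) ^ k * (a gchoose k) * (b gchoose (Suc m - k)) *
      (of_nat (Suc m - k) * P (Suc m - k - 1) u) * Q k v)
   = b * binom_conv P Q m a (b - 1) u v"
proof -
  have "(\<Sum>k\<le>Suc m. (-1) ^ k * (a gchoose k) * (b gchoose (Suc m - k)) *
      (of_nat (Suc m - k) * P (Suc m - k - 1) u) * Q k v)
    = (\<Sum>k\<le>m. (-1) ^ k * (a gchoose k) * (b gchoose (Suc m - k)) *
      (of_nat (Suc m - k) * P (Suc m - k - 1) u) * Q k v)"
    by (simp add: sum.atMost_Suc)
  also have "\<dots> = (\<Sum>k\<le>m. b * ((-1) ^ k * (a gchoose k) * ((b - 1) gchoose (m - k)) * P (m - k) u * Q k v))"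
  proof (rule sum.cong [OF refl])
    fix k assume "k \<in> {..m}"
    then have "Suc m - k = Suc (m - k)" by simp
    then have "(-1) ^ k * (a gchoose k) * (b gchoose (Suc m - k)) * (of_nat (Suc m - k) * P (Suc m - k - 1) u) * Q k v
        = (-1) ^ k * (a gchoose k) * (of_nat (Suc (m - k)) * (b gchoose Suc (m - k))) * P (m - k) u * Q k v"
      by (simp only: diff_Suc_1 ac_simps)
    also have "of_nat (Suc (m - k)) * (b gchoose Suc (m - k)) = b * ((b - 1) gchoose (m - k))"
      by (rule gbinomial_absorption)
    finally show "(-1) ^ k * (a gchoose k) * (b gchoose (Suc m - k)) * (of_nat (Suc m - k) * P (Suc m - k - 1) u) * Q k v
        = b * ((-1) ^ k * (a gchoose k) * ((b - 1) gchoose (m - k)) * P (m - k) u * Q k v)"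
      by (simp only: ac_simps)
  qed
  also have "\<dots> = b * binom_conv P Q m a (b - 1) u v"
    by (simp add: binom_conv_def sum_distrib_left)
  finally show ?thesis .
qed

lemma binom_conv_absorb_second:
  "(\<Sum>k\<le>Suc m. (-1) ^ k * (a gchoose k) * (b gchoose (Suc m - k)) * P (Suc m - k) u *
      (of_nat k * Q (k - 1) v))
   = - a * binom_conv P Q m (a - 1) b u v"
proof -
  have "(\<Sum>k\<le>Suc m. (-1) ^ k * (a gchoose k) * (b gchoose (Suc m - k)) * P (Suc m - k) u *
      (of_nat k * Q (k - 1) v))
    = (\<Sum>j\<le>m. (-1) ^ Suc j * (a gchoose Suc j) * (b gchoose (m - j)) * P (m - j) u *
      (of_nat (Suc j) * Q j v))"
    by (subst sum.atMost_Suc_shift) simp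
  also have "\<dots> = (\<Sum>j\<le>m. - a * ((-1) ^ j * ((a - 1) gchoose j) * (b gchoose (m - j)) * P (m - j) u * Q j v))"
  proof (rule sum.cong [OF refl])
    fix j
    have "(-1) ^ Suc j * (a gchoose Suc j) * (b gchoose (m - j)) * P (m - j) u * (of_nat (Suc j) * Q j v)
        = - ((-1) ^ j * (of_nat (Suc j) * (a gchoose Suc j)) * (b gchoose (m - j)) * P (m - j) u * Q j v)"
      by (simp add: algebra_simps)
    also have "of_nat (Suc j) * (a gchoose Suc j) = a * ((a - 1) gchoose j)"
      by (rule gbinomial_absorption)
    finally show "(-1) ^ Suc j * (a gchoose Suc j) * (b gchoose (m - j)) * P (m - j) u * (of_nat (Suc j) * Q j v)
        = - a * ((-1) ^ j * ((a - 1) gchoose j) * (b gchoose (m - j)) * P (m - j) u * Q j v)"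
      by (simp only: mult_minus_left ac_simps)
  qed
  also have "\<dots> = - a * binom_conv P Q m (a - 1) b u v"
    by (simp add: binom_conv_def sum_distrib_left)
  finally show ?thesis .
qed

lemma binom_conv_has_field_derivative:
  assumes P: "appell_seq P" and Q: "appell_seq Q"
    and u: "(u has_field_derivative du) (at y)" and v: "(v has_field_derivative dv) (at y)"
  shows "((\<lambda>y. binom_conv P Q (Suc m) a b (u y) (v y)) has_field_derivative
     du * b * binom_conv P Q m a (b - 1) (u y) (v y) - dv * a * binom_conv P Q m (a - 1) b (u y) (v y)) (at y)"
proof -
  let ?c = "\<lambda>k. (-1) ^ k * (a gchoose k) * (b gchoose (Suc m - k))"
  let ?dP = "\<lambda>k. of_nat (Suc m - k) * P (Suc m - k - 1) (u y)"
  let ?dQ = "\<lambda>k. of_nat k * Q (k - 1) (v y)"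
  have "((\<lambda>y. P (Suc m - k) (u y) * Q k (v y)) has_field_derivative
      P (Suc m - k) (u y) * (?dQ k * dv) + ?dP k * du * Q k (v y)) (at y)" for k
    by (rule DERIV_mult' [OF appell_seq_has_field_derivative_comp [OF P u]
          appell_seq_has_field_derivative_comp [OF Q v]])
  then have "((\<lambda>y. \<Sum>k\<le>Suc m. ?c k * (P (Suc m - k) (u y) * Q k (v y))) has_field_derivative
      (\<Sum>k\<le>Suc m. ?c k * (P (Suc m - k) (u y) * (?dQ k * dv) + ?dP k * du * Q k (v y)))) (at y)"
    by (intro DERIV_sum DERIV_cmult)
  then have D: "((\<lambda>y. binom_conv P Q (Suc m) a b (u y) (v y)) has_field_derivative
      (\<Sum>k\<le>Suc m. ?c k * (P (Suc m - k) (u y) * (?dQ k * dv) + ?dP k * du * Q k (v y)))) (at y)"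
    unfolding binom_conv_def by (simp only: mult.assoc)
  have "(\<Sum>k\<le>Suc m. ?c k * (P (Suc m - k) (u y) * (?dQ k * dv) + ?dP k * du * Q k (v y)))
      = du * (\<Sum>k\<le>Suc m. ?c k * ?dP k * Q k (v y)) + dv * (\<Sum>k\<le>Suc m. ?c k * P (Suc m - k) (u y) * ?dQ k)"
    by (simp add: sum_distrib_left sum.distrib [symmetric] algebra_simps)
  also have "\<dots> = du * b * binom_conv P Q m a (b - 1) (u y) (v y) - dv * a * binom_conv P Q m (a - 1) b (u y) (v y)"
    unfolding binom_conv_absorb_first binom_conv_absorb_second by (simp add: algebra_simps)
  finally show ?thesis using D by simp
qed

lemma binom_conv_pascal:
  "a * binom_conv P Q m (a - 1) b u v + b * binom_conv P Q m a (b - 1) u v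
   = (a + b - of_nat m) * binom_conv P Q m a b u v"
proof -
  have "a * binom_conv P Q m (a - 1) b u v + b * binom_conv P Q m a (b - 1) u v
    = (\<Sum>k\<le>m. (-1) ^ k * (a * ((a - 1) gchoose k)) * (b gchoose (m - k)) * P (m - k) u * Q k v
        + (-1) ^ k * (a gchoose k) * (b * ((b - 1) gchoose (m - k))) * P (m - k) u * Q k v)"
    by (simp add: binom_conv_def sum_distrib_left sum.distrib algebra_simps)
  also have "\<dots> = (\<Sum>k\<le>m. (a + b - of_nat m) * ((-1) ^ k * (a gchoose k) * (b gchoose (m - k)) * P (m - k) u * Q k v))"
  proof (rule sum.cong [OF refl])
    fix k assume "k \<in> {..m}"
    then have diff: "(of_nat (m - k) :: complex) = of_nat m - of_nat k"
      by (simp add: of_nat_diff)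
    have absorb_a: "a * ((a - 1) gchoose k) = (a - of_nat k) * (a gchoose k)"
      by (simp add: gbinomial_absorb_comp)
    have absorb_b: "b * ((b - 1) gchoose (m - k)) = (b - of_nat (m - k)) * (b gchoose (m - k))"
      by (simp add: gbinomial_absorb_comp)
    show "(-1) ^ k * (a * ((a - 1) gchoose k)) * (b gchoose (m - k)) * P (m - k) u * Q k v
        + (-1) ^ k * (a gchoose k) * (b * ((b - 1) gchoose (m - k))) * P (m - k) u * Q k v
      = (a + b - of_nat m) * ((-1) ^ k * (a gchoose k) * (b gchoose (m - k)) * P (m - k) u * Q k v)"
      unfolding absorb_a absorb_b diff by (simp add: algebra_simps)
  qed
  also have "\<dots> = (a + b - of_nat m) * binom_conv P Q m a b u v"
    by (simp add: binom_conv_def sum_distrib_left)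
  finally show ?thesis .
qed

lemma binom_conv_has_field_derivative_param:
  assumes a: "(a has_field_derivative da) (at r)" and b: "(b has_field_derivative db) (at r)"
  shows "((\<lambda>r. binom_conv P Q n (a r) (b r) u v) has_field_derivative
    (\<Sum>k\<le>n. (-1) ^ k * (gchoose_deriv k (a r) * da * (b r gchoose (n - k))
       + (a r gchoose k) * (gchoose_deriv (n - k) (b r) * db)) * P (n - k) u * Q k v)) (at r)"
proof -
  have "((\<lambda>r. (a r gchoose k) * (b r gchoose (n - k))) has_field_derivative
      (a r gchoose k) * (gchoose_deriv (n - k) (b r) * db) + gchoose_deriv k (a r) * da * (b r gchoose (n - k))) (at r)"
    for k
    by (intro DERIV_mult' DERIV_chain2 [OF has_field_derivative_gchoose] a b)
  then have "((\<lambda>r. \<Sum>k\<le>n. (-1) ^ k * ((a r gchoose k) * (b r gchoose (n - k))) * (P (n - k) u * Q k v))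
      has_field_derivative
      (\<Sum>k\<le>n. (-1) ^ k * ((a r gchoose k) * (gchoose_deriv (n - k) (b r) * db)
        + gchoose_deriv k (a r) * da * (b r gchoose (n - k))) * (P (n - k) u * Q k v))) (at r)"
    by (intro DERIV_sum DERIV_cmult DERIV_cmult_right)
  then show ?thesis
    unfolding binom_conv_def by (simp add: mult.assoc add.commute)
qed

lemma binom_conv_minus_one_left:
  "binom_conv P Q n (-1) b u v = (\<Sum>k\<le>n. (b gchoose (n - k)) * P (n - k) u * Q k v)"
  unfolding binom_conv_def gbinomial_minus_one
  by (simp add: mult.assoc flip: power_add mult_2)

lemma binom_conv_minus_one_right:
  "binom_conv P Q n a (-1) u v = (-1) ^ n * (\<Sum>k\<le>n. (a gchoose k) * P (n - k) u * Q k v)"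
  unfolding binom_conv_def sum_distrib_left gbinomial_minus_one
proof (rule sum.cong [OF refl])
  fix k assume "k \<in> {..n}"
  then have "(-1) ^ k * (-1) ^ (n - k) = ((-1) ^ n :: complex)"
    by (simp flip: power_add)
  then show "(-1) ^ k * (a gchoose k) * (-1) ^ (n - k) * P (n - k) u * Q k v
      = (-1) ^ n * ((a gchoose k) * P (n - k) u * Q k v)"
    by (simp add: algebra_simps)
qed

lemma binom_conv_minus_one_minus_one:
  "binom_conv P Q p (-1) (-1) u v = (\<Sum>l\<le>p. (-1) ^ l * P l u * Q (p - l) v)"
proof -
  have "binom_conv P Q p (-1) (-1) u v = (\<Sum>k\<le>p. (-1) ^ p * (-1) ^ k * P (p - k) u * Q k v)"
    unfolding binom_conv_minus_one_right gbinomial_minus_one sum_distrib_left by (simp add: mult.assoc)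
  also have "\<dots> = (\<Sum>l\<le>p. (-1) ^ p * (-1) ^ (p - l) * P l u * Q (p - l) v)"
    by (subst sum_atMost_reflect) (auto intro!: sum.cong)
  also have "\<dots> = (\<Sum>l\<le>p. (-1) ^ l * P l u * Q (p - l) v)"
  proof (rule sum.cong [OF refl])
    fix l assume "l \<in> {..p}"
    then have "(-1) ^ p = ((-1) ^ l * (-1) ^ (p - l) :: complex)"
      by (simp flip: power_add)
    moreover have "(-1) ^ (p - l) * (-1) ^ (p - l) = (1 :: complex)"
      by (simp flip: power_add)
    ultimately have "(-1) ^ p * (-1) ^ (p - l) = ((-1) ^ l :: complex)"
      by (metis mult.assoc mult_1_right)
    then show "(-1) ^ p * (-1) ^ (p - l) * P l u * Q (p - l) v = (-1) ^ l * P l u * Q (p - l) v"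
      by simp
  qed
  finally show ?thesis .
qed

lemma binom_conv_of_nat_minus_one:
  "binom_conv P Q n (of_nat N) (-1) u v = (-1) ^ n * (\<Sum>k\<le>n. of_nat (N choose k) * P (n - k) u * Q k v)"
  unfolding binom_conv_minus_one_right by (simp add: binomial_gbinomial)

lemma binom_conv_minus_one_of_nat:
  "binom_conv P Q n (-1) (of_nat N) u v = (\<Sum>k\<le>n. of_nat (N choose k) * P k u * Q (n - k) v)"
  unfolding binom_conv_minus_one_left
  by (subst sum_atMost_reflect) (auto simp: binomial_gbinomial intro!: sum.cong)

lemma binom_conv_minus_one_0: "binom_conv P Q n (-1) 0 u v = P 0 u * Q n v"
proof -
  have "binom_conv P Q n (-1) 0 u v = (\<Sum>k\<le>n. if k = n then P 0 u * Q n v else 0)"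
    unfolding binom_conv_minus_one_left by (intro sum.cong) (auto simp: gbinomial_0_left)
  then show ?thesis by simp
qed

lemma binom_conv_minus_one_left_has_field_derivative_at_0:
  "((\<lambda>b. binom_conv P Q n (-1) b u v) has_field_derivative
     - (\<Sum>k=1..n. (-1) ^ k * P k u / of_nat k * Q (n - k) v)) (at 0)"
proof -
  have "((\<lambda>b. \<Sum>k\<le>n. (b gchoose (n - k)) * (P (n - k) u * Q k v)) has_field_derivative
      (\<Sum>k\<le>n. gchoose_deriv (n - k) 0 * (P (n - k) u * Q k v))) (at 0)"
    by (intro DERIV_sum DERIV_cmult_right has_field_derivative_gchoose)
  moreover have "(\<Sum>k\<le>n. gchoose_deriv (n - k) 0 * (P (n - k) u * Q k v))
      = (\<Sum>k=1..n. gchoose_deriv k 0 * (P k u * Q (n - k) v))"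
    by (subst sum_atMost_reflect) (simp add: sum_atMost_split_0)
  moreover have "gchoose_deriv k 0 * (P k u * Q (n - k) v) = - ((-1) ^ k * P k u / of_nat k * Q (n - k) v)"
    if "k \<in> {1..n}" for k
  proof -
    have "(-1) ^ (k - 1) = - ((-1) ^ k :: complex)"
      using that by (cases k) simp_all
    then show ?thesis using that by (simp add: gchoose_deriv_at_0)
  qed
  ultimately show ?thesis
    unfolding binom_conv_minus_one_left by (simp add: mult.assoc sum_negf [symmetric])
qed

lemma binom_conv_complementary_has_field_derivative_at_0:
  assumes "n \<le> N"
  shows "((\<lambda>a. binom_conv P Q n a (of_nat N - a) u v) has_field_derivative
     - (\<Sum>k=1..n. of_nat (N choose (n - k)) * Q k v / of_nat k * P (n - k) u)
     - of_nat (N choose n) * (harm N - harm (N - n)) * P n u * Q 0 v) (at 0)"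
proof -
  have "((\<lambda>a. of_nat N - a) has_field_derivative -1) (at 0)"
    by (auto intro!: derivative_eq_intros)
  from binom_conv_has_field_derivative_param [OF DERIV_ident this, of P Q n u v]
  have "((\<lambda>a. binom_conv P Q n a (of_nat N - a) u v) has_field_derivative
    (\<Sum>k\<le>n. (-1) ^ k * (gchoose_deriv k 0 * (of_nat N gchoose (n - k))
       - (0 gchoose k) * gchoose_deriv (n - k) (of_nat N)) * P (n - k) u * Q k v)) (at 0)"
    by simp
  moreover have "(-1) ^ k * (gchoose_deriv k 0 * (of_nat N gchoose (n - k))
       - (0 gchoose k) * gchoose_deriv (n - k) (of_nat N)) * P (n - k) u * Q k v
      = - (of_nat (N choose (n - k)) * Q k v / of_nat k * P (n - k) u)"
    if "k \<in> {1..n}" for k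
  proof -
    have "(-1) ^ k * (-1) ^ (k - 1) = (-1 :: complex)"
      using that by (cases k) simp_all
    then show ?thesis
      using that by (simp add: gchoose_deriv_at_0 gbinomial_0_left binomial_gbinomial mult.assoc [symmetric])
  qed
  ultimately show ?thesis
    using gchoose_deriv_of_nat [OF assms]
    by (simp add: sum_atMost_split_0 gbinomial_0_left sum_negf [symmetric])
qed

section \<open>Bernoulli and Euler polynomials\<close>

lemma appell_seq_bernpoly: "appell_seq bernpoly"
  using binomial_polynomial_has_field_derivative [of _ bern 0]
  by (simp add: appell_seq_def bernpoly_def [abs_def])

lemma appell_seq_eulpoly: "appell_seq eulpoly"
  using binomial_polynomial_has_field_derivative [of _ "\<lambda>k. eul k / 2 ^ k" "1/2"]
  by (simp add: appell_seq_def eulpoly_def [abs_def])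

lemma bern_0 [simp]: "bern 0 = 1"
  by (subst bern.simps) simp

lemma bern_1: "bern 1 = -1/2"
  by (subst bern.simps) simp

lemma bern_binomial_sum:
  assumes "2 \<le> m"
  shows "(\<Sum>k<m. of_nat (m choose k) * bern k) = 0"
proof -
  obtain i where m: "m = Suc (Suc i)" using assms by (metis add_2_eq_Suc le_Suc_ex)
  have "bern (Suc i) = - (\<Sum>k<Suc i. of_nat (m choose k) * bern k) / of_nat m"
    using m by (subst bern.simps) simp
  moreover have "(\<Sum>k<m. of_nat (m choose k) * bern k)
      = (\<Sum>k<Suc i. of_nat (m choose k) * bern k) + of_nat m * bern (Suc i)"
    using m by (simp del: of_nat_Suc)
  ultimately show ?thesis using m by (simp add: field_simps del: of_nat_Suc sum.lessThan_Suc)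
qed

lemma bernpoly_0 [simp]: "bernpoly 0 x = 1"
  by (simp add: bernpoly_def)

lemma bernpoly_1: "bernpoly (Suc 0) x = x - 1/2"
  by (simp add: bernpoly_def bern_1[simplified])

lemma bernpoly_at_0: "bernpoly j 0 = bern j"
proof -
  have "bernpoly j 0 = (\<Sum>k\<le>j. if k = j then bern j else 0)"
    unfolding bernpoly_def by (rule sum.cong) auto
  then show ?thesis by simp
qed

lemma bernpoly_at_1: "bernpoly j 1 = bern j + (if j = 1 then 1 else 0)"
proof (cases "2 \<le> j")
  case True
  have "bernpoly j 1 = (\<Sum>k<j. of_nat (j choose k) * bern k) + bern j"
    by (simp add: bernpoly_def lessThan_Suc_atMost [symmetric])
  then show ?thesis using bern_binomial_sum [OF True] True by simp
next
  case False
  then have "j = 0 \<or> j = 1" by auto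
  then show ?thesis by (auto simp: bernpoly_def bern_1)
qed

lemma bernpoly_reflect: "bernpoly j (1 - x) = (-1) ^ j * bernpoly j x"
proof -
  define D where "D j x = bernpoly j (1 - x) - (-1) ^ j * bernpoly j x" for j x
  have D_deriv: "(D (Suc j) has_field_derivative - of_nat (Suc j) * D j x) (at x)" for j x
  proof -
    have "((\<lambda>x. 1 - x) has_field_derivative -1) (at x)"
      by (auto intro!: derivative_eq_intros)
    from appell_seq_has_field_derivative_comp [OF appell_seq_bernpoly this, of "Suc j"]
    have "((\<lambda>x. bernpoly (Suc j) (1 - x)) has_field_derivative of_nat (Suc j) * bernpoly j (1 - x) * -1) (at x)"
      by simp
    moreover have "(bernpoly (Suc j) has_field_derivative of_nat (Suc j) * bernpoly j x) (at x)"
      by (metis appell_seq_def appell_seq_bernpoly diff_Suc_1)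
    ultimately show ?thesis
      unfolding D_def [abs_def] by (auto intro!: derivative_eq_intros simp: algebra_simps)
  qed
  have "D j x = 0" for j x
  proof (induction j arbitrary: x)
    case (Suc j)
    have "(D (Suc j) has_field_derivative 0) (at x)" for x
      using D_deriv [of j x] Suc.IH by simp
    then have const: "D (Suc j) x = D (Suc j) 0" for x
      using has_field_derivative_const_slope [of "D (Suc j)" 0 x 0] by simp
    have "D (Suc (Suc j)) 1 - D (Suc (Suc j)) 0 = - of_nat (Suc (Suc j)) * D (Suc j) 0 * (1 - 0)"
      by (rule has_field_derivative_const_slope) (metis D_deriv const)
    moreover have "D (Suc (Suc j)) 1 - D (Suc (Suc j)) 0 = 0"
      by (simp add: D_def bernpoly_at_0 bernpoly_at_1)
    ultimately show ?case using const by (simp del: of_nat_Suc)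
  qed (simp add: D_def)
  then show ?thesis by (simp add: D_def)
qed

lemma bern_reflect: "j \<noteq> 1 \<Longrightarrow> (-1) ^ j * bern j = bern j"
  using bernpoly_reflect [of j 0] by (simp add: bernpoly_at_0 bernpoly_at_1)

lemma eul_0 [simp]: "eul 0 = 1"
  by (subst eul.simps) simp

lemma eul_odd: "odd n \<Longrightarrow> eul n = 0"
proof (induction n rule: less_induct)
  case (less n)
  have "(\<Sum>k\<in>{k. k < n \<and> even (n - k)}. of_nat (n choose k) * eul k) = 0"
  proof (rule sum.neutral, safe)
    fix k assume k: "k < n" "even (n - k)"
    then have "odd k" using less.prems by (metis dvd_diff_nat even_add le_add_diff_inverse2 less_imp_le_nat)
    then show "of_nat (n choose k) * eul k = 0" using less.IH k by simp
  qed
  moreover have "n \<noteq> 0" using less.prems by (intro notI) simp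
  ultimately show ?case by (subst eul.simps) simp
qed

lemma eul_binomial_sum:
  assumes "m \<noteq> 0"
  shows "(\<Sum>k\<le>m. of_nat (m choose k) * eul k * (1 + (-1) ^ (m - k))) = 0"
proof -
  have "{k\<in>{..<m}. even (m - k)} = {k. k < m \<and> even (m - k)}"
    by auto
  then have "(\<Sum>k<m. if even (m - k) then of_nat (m choose k) * eul k else 0)
      = (\<Sum>k\<in>{k. k < m \<and> even (m - k)}. of_nat (m choose k) * eul k)"
    by (metis (no_types) finite_lessThan sum.inter_filter)
  also have "\<dots> = - eul m"
    using assms by (subst (2) eul.simps) simp
  finally have "(\<Sum>k\<le>m. if even (m - k) then of_nat (m choose k) * eul k else 0) = 0"
    by (simp add: lessThan_Suc_atMost [symmetric])
  moreover have "(\<Sum>k\<le>m. of_nat (m choose k) * eul k * (1 + (-1) ^ (m - k)))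
      = 2 * (\<Sum>k\<le>m. if even (m - k) then of_nat (m choose k) * eul k else 0)"
    unfolding sum_distrib_left by (intro sum.cong) (auto simp: neg_one_odd_power)
  ultimately show ?thesis by simp
qed

lemma eulpoly_0 [simp]: "eulpoly 0 x = 1"
  by (simp add: eulpoly_def)

lemma eulpoly_1: "eulpoly (Suc 0) x = x - 1/2"
  using eul_odd [of 1] by (simp add: eulpoly_def)

lemma eulpoly_at_1_plus_at_0: "eulpoly m 1 + eulpoly m 0 = (if m = 0 then 2 else 0)"
proof -
  have "eulpoly m 1 + eulpoly m 0
      = (\<Sum>k\<le>m. of_nat (m choose k) * eul k * (1 + (-1) ^ (m - k))) / 2 ^ m"
    unfolding eulpoly_def sum.distrib [symmetric] sum_divide_distrib
  proof (rule sum.cong [OF refl])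
    fix k assume "k \<in> {..m}"
    then have "(2::complex) ^ m = 2 ^ k * 2 ^ (m - k)"
      by (simp flip: power_add)
    moreover have "(0 - 1/2 :: complex) ^ (m - k) = (-1) ^ (m - k) / 2 ^ (m - k)"
      by (metis diff_0 minus_divide_left power_divide)
    ultimately show "of_nat (m choose k) * (eul k / 2 ^ k) * (1 - 1/2) ^ (m - k)
        + of_nat (m choose k) * (eul k / 2 ^ k) * (0 - 1/2) ^ (m - k)
        = of_nat (m choose k) * eul k * (1 + (-1) ^ (m - k)) / 2 ^ m"
      by (simp add: power_divide field_simps)
  qed
  then show ?thesis
    using eul_binomial_sum [of m] by (cases "m = 0") simp_all
qed

lemma eulpoly_reflect: "eulpoly m (1 - x) = (-1) ^ m * eulpoly m x"
  unfolding eulpoly_def sum_distrib_left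
proof (rule sum.cong [OF refl])
  fix k assume "k \<in> {..m}"
  then have "(-1::complex) ^ m = (-1) ^ (m - k) * (-1) ^ k"
    by (simp flip: power_add)
  moreover have "(1 - x - 1/2) ^ (m - k) = (-1) ^ (m - k) * (x - 1/2) ^ (m - k)"
    by (simp flip: power_mult_distrib)
  ultimately show "of_nat (m choose k) * (eul k / 2 ^ k) * (1 - x - 1/2) ^ (m - k) =
      (-1) ^ m * (of_nat (m choose k) * (eul k / 2 ^ k) * (x - 1/2) ^ (m - k))"
    using eul_odd [of k] by (cases "even k") simp_all
qed

lemma eulpoly_at_0_reflect: "m \<noteq> 0 \<Longrightarrow> (-1) ^ m * eulpoly m 0 = - eulpoly m 0"
  using eulpoly_reflect [of m 0] eulpoly_at_1_plus_at_0 [of m] by (simp add: eq_neg_iff_add_eq_0)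

section \<open>The Sun--Pan identity for Bernoulli polynomials\<close>

abbreviation bern_conv :: "nat \<Rightarrow> complex \<Rightarrow> complex \<Rightarrow> complex \<Rightarrow> complex \<Rightarrow> complex" where
  "bern_conv \<equiv> binom_conv bernpoly bernpoly"

definition sun_pan_bern :: "nat \<Rightarrow> complex \<Rightarrow> complex \<Rightarrow> complex \<Rightarrow> complex \<Rightarrow> complex \<Rightarrow> complex \<Rightarrow> complex" where
  "sun_pan_bern n r s t x y z = r * bern_conv n s t x y + s * bern_conv n t r y z + t * bern_conv n r s z x"

lemma sun_pan_bern_rotate: "sun_pan_bern n r s t x y z = sun_pan_bern n s t r y z x"
  by (simp add: sun_pan_bern_def algebra_simps)

lemma sun_pan_bern_has_field_derivative:
  assumes "r + s + t = of_nat (Suc m)"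
  shows "((\<lambda>y. sun_pan_bern (Suc m) r s t x y (1 - x - y)) has_field_derivative
           - s * sun_pan_bern m r (s - 1) t x y (1 - x - y)) (at y)"
proof -
  let ?z = "1 - x - y"
  have c: "((\<lambda>y. x) has_field_derivative 0) (at y)" for x :: complex by (rule DERIV_const)
  have i: "((\<lambda>y. y) has_field_derivative 1) (at y)" by (rule DERIV_ident)
  have z: "((\<lambda>y. 1 - x - y) has_field_derivative -1) (at y)" by (auto intro!: derivative_eq_intros)
  note d1 = binom_conv_has_field_derivative [OF appell_seq_bernpoly appell_seq_bernpoly c i, of m s t]
  note d2 = binom_conv_has_field_derivative [OF appell_seq_bernpoly appell_seq_bernpoly i z, of m t r]
  note d3 = binom_conv_has_field_derivative [OF appell_seq_bernpoly appell_seq_bernpoly z c, of m r s]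
  have D: "((\<lambda>y. sun_pan_bern (Suc m) r s t x y (1 - x - y)) has_field_derivative
     r * (0 * t * bern_conv m s (t - 1) x y - 1 * s * bern_conv m (s - 1) t x y)
      + s * (1 * r * bern_conv m t (r - 1) y ?z - (-1) * t * bern_conv m (t - 1) r y ?z)
      + t * ((-1) * s * bern_conv m r (s - 1) ?z x - 0 * r * bern_conv m (r - 1) s ?z x)) (at y)"
    unfolding sun_pan_bern_def by (intro DERIV_add DERIV_cmult d1 d2 d3)
  have "t + r - of_nat m = 1 - s"
    using assms by (simp add: algebra_simps)
  with binom_conv_pascal [of t bernpoly bernpoly m r y ?z]
  have pascal: "t * bern_conv m (t - 1) r y ?z + r * bern_conv m t (r - 1) y ?z = (1 - s) * bern_conv m t r y ?z"
    by simp
  have "r * (0 * t * bern_conv m s (t - 1) x y - 1 * s * bern_conv m (s - 1) t x y)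
      + s * (1 * r * bern_conv m t (r - 1) y ?z - (-1) * t * bern_conv m (t - 1) r y ?z)
      + t * ((-1) * s * bern_conv m r (s - 1) ?z x - 0 * r * bern_conv m (r - 1) s ?z x)
    = - s * (r * bern_conv m (s - 1) t x y + t * bern_conv m r (s - 1) ?z x)
      + s * (t * bern_conv m (t - 1) r y ?z + r * bern_conv m t (r - 1) y ?z)"
    by (simp add: algebra_simps)
  also have "\<dots> = - s * sun_pan_bern m r (s - 1) t x y ?z"
    unfolding pascal by (simp add: sun_pan_bern_def algebra_simps)
  finally show ?thesis using D by simp
qed

lemma bern_conv_at_1_0:
  "bern_conv (Suc j) a b 1 0 = bern_conv (Suc j) a b 0 0 + (-1) ^ j * (a gchoose j) * b * bern j"
proof -
  have "bern_conv (Suc j) a b 1 0 = (\<Sum>k\<le>Suc j.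
      (-1) ^ k * (a gchoose k) * (b gchoose (Suc j - k)) * bernpoly (Suc j - k) 0 * bernpoly k 0
      + (if k = j then (-1) ^ j * (a gchoose j) * b * bern j else 0))"
    unfolding binom_conv_def
    by (rule sum.cong) (auto simp: bernpoly_at_0 bernpoly_at_1 Suc_diff_le algebra_simps)
  then show ?thesis by (simp add: sum.distrib binom_conv_def)
qed

lemma bern_conv_at_0_1:
  "bern_conv (Suc j) a b 0 1 = bern_conv (Suc j) a b 0 0 - a * (b gchoose j) * bern j"
proof -
  have "bern_conv (Suc j) a b 0 1 = (\<Sum>k\<le>Suc j.
      (-1) ^ k * (a gchoose k) * (b gchoose (Suc j - k)) * bernpoly (Suc j - k) 0 * bernpoly k 0
      + (if k = 1 then - a * (b gchoose j) * bern j else 0))"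
    unfolding binom_conv_def
    by (rule sum.cong) (auto simp: bernpoly_at_0 bernpoly_at_1 algebra_simps)
  then show ?thesis by (simp add: sum.distrib binom_conv_def)
qed

lemma sun_pan_bern_at_0_1_0:
  "sun_pan_bern (Suc (Suc m)) r s t 0 1 0 = sun_pan_bern (Suc (Suc m)) r s t 0 0 1"
proof -
  have "sun_pan_bern (Suc (Suc m)) r s t 0 1 0 - sun_pan_bern (Suc (Suc m)) r s t 0 0 1
      = ((-1) ^ Suc m * bern (Suc m) - bern (Suc m)) * (r * s * (t gchoose Suc m) - s * t * (r gchoose Suc m))"
    unfolding sun_pan_bern_def bern_conv_at_1_0 bern_conv_at_0_1 by (simp add: algebra_simps)
  also have "\<dots> = 0"
  proof (cases m)
    case (Suc m')
    then show ?thesis using bern_reflect [of "Suc m"] by simp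
  qed simp
  finally show ?thesis by simp
qed

lemma sun_pan_bern_constant:
  assumes IH: "\<And>r s t x y z. r + s + t = of_nat m \<Longrightarrow> x + y + z = 1 \<Longrightarrow> sun_pan_bern m r s t x y z = 0"
    and "r + s + t = of_nat (Suc m)" and "x + y + z = 1"
  shows "sun_pan_bern (Suc m) r s t x y z = sun_pan_bern (Suc m) r s t 0 0 1"
proof -
  have along_y: "sun_pan_bern (Suc m) r s t x y (1 - x - y) = sun_pan_bern (Suc m) r s t x y' (1 - x - y')"
    if "r + s + t = of_nat (Suc m)" for r s t x y y'
  proof (rule has_field_derivative_0_imp_eq [where g = "\<lambda>y. sun_pan_bern (Suc m) r s t x y (1 - x - y)"])
    fix y
    have "sun_pan_bern m r (s - 1) t x y (1 - x - y) = 0"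
      by (rule IH) (use that in \<open>simp_all add: algebra_simps\<close>)
    then show "((\<lambda>y. sun_pan_bern (Suc m) r s t x y (1 - x - y)) has_field_derivative 0) (at y)"
      using sun_pan_bern_has_field_derivative [OF that, of x y] by simp
  qed
  have "t + r + s = of_nat (Suc m)"
    using assms(2) by (simp add: algebra_simps)
  have "z = 1 - x - y" using assms(3) by (simp add: algebra_simps)
  then have "sun_pan_bern (Suc m) r s t x y z = sun_pan_bern (Suc m) r s t x 0 (1 - x)"
    using along_y [OF assms(2), of x y 0] by simp
  also have "\<dots> = sun_pan_bern (Suc m) t r s (1 - x) x 0"
    by (metis sun_pan_bern_rotate)
  also have "\<dots> = sun_pan_bern (Suc m) t r s (1 - x) 0 x"
    using along_y [OF \<open>t + r + s = _\<close>, of "1 - x" x 0] by simp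
  also have "\<dots> = sun_pan_bern (Suc m) r s t 0 x (1 - x)"
    by (metis sun_pan_bern_rotate)
  also have "\<dots> = sun_pan_bern (Suc m) r s t 0 0 1"
    using along_y [OF assms(2), of 0 x 0] by simp
  finally show ?thesis .
qed

lemma sun_pan_bern_constant_annihilated:
  assumes const: "\<And>y. sun_pan_bern (Suc m) r s t 0 y (1 - y) = c"
    and "r + s + t = of_nat (Suc m)"
  shows "(s + 1) * c = 0"
proof -
  have "r + (s + 1) + t = of_nat (Suc (Suc m))"
    using assms(2) by (simp add: algebra_simps)
  from sun_pan_bern_has_field_derivative [OF this, of 0]
  have "((\<lambda>y. sun_pan_bern (Suc (Suc m)) r (s + 1) t 0 y (1 - y)) has_field_derivative - (s + 1) * c) (at y)" for y
    using const by simp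
  from has_field_derivative_const_slope [OF this, of 1 0] sun_pan_bern_at_0_1_0 [of m r "s + 1" t]
  have "- (s + 1) * c = 0" by simp
  then show ?thesis by (simp only: mult_minus_left neg_equal_0_iff_equal)
qed

theorem sun_pan_bern_eq_0:
  "r + s + t = of_nat n \<Longrightarrow> x + y + z = 1 \<Longrightarrow> sun_pan_bern n r s t x y z = 0"
proof (induction n arbitrary: r s t x y z)
  case 0
  then show ?case by (simp add: sun_pan_bern_def algebra_simps)
next
  case (Suc m)
  have const: "sun_pan_bern (Suc m) r s t x y z = sun_pan_bern (Suc m) r s t 0 0 1"
    if "r + s + t = of_nat (Suc m)" "x + y + z = 1" for r s t x y z
    using Suc.IH that by (rule sun_pan_bern_constant)
  define c where "c r s t = sun_pan_bern (Suc m) r s t 0 0 1" for r s t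
  have annihilated: "(s + 1) * c r s t = 0" if "r + s + t = of_nat (Suc m)" for r s t
    using sun_pan_bern_constant_annihilated [OF const [OF that] that] by (simp add: c_def)
  have rotate: "c r s t = c s t r" if "r + s + t = of_nat (Suc m)" for r s t
  proof -
    have "s + t + r = of_nat (Suc m)" using that by (simp add: algebra_simps)
    then show ?thesis
      unfolding c_def using const [of s t r 0 1 0] sun_pan_bern_rotate [of "Suc m" r s t 0 0 1] by simp
  qed
  have "c r s t = 0"
  \<comment> \<open>otherwise r = s = t = -1, contradicting r + s + t = m + 1\<close>
  proof (rule ccontr)
    assume "c r s t \<noteq> 0"
    have "s + t + r = of_nat (Suc m)" "t + r + s = of_nat (Suc m)"
      using Suc.prems(1) by (simp_all add: algebra_simps)
    then have "s + 1 = 0" "t + 1 = 0" "r + 1 = 0"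
      using annihilated rotate Suc.prems(1) \<open>c r s t \<noteq> 0\<close> by (metis mult_eq_0_iff)+
    moreover have "(of_nat (Suc m + 3) :: complex) = (r + 1) + (s + 1) + (t + 1)"
      using Suc.prems(1) by (simp add: algebra_simps)
    ultimately have "(of_nat (Suc m + 3) :: complex) = 0"
      by simp
    then show False by (simp only: of_nat_eq_0_iff)
  qed
  then show ?case using const [OF Suc.prems] by (simp add: c_def)
qed

section \<open>The mixed Bernoulli--Euler identity\<close>

definition sun_pan_mixed :: "nat \<Rightarrow> complex \<Rightarrow> complex \<Rightarrow> complex \<Rightarrow> complex \<Rightarrow> complex \<Rightarrow> complex \<Rightarrow> complex" where
  "sun_pan_mixed m r s t x y z = r / 2 * binom_conv eulpoly eulpoly m s t x y
     + binom_conv bernpoly eulpoly (Suc m) t r y z - binom_conv eulpoly bernpoly (Suc m) r s z x"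

lemma sun_pan_mixed_has_field_derivative_y:
  assumes "r + s + t = of_nat (Suc m)"
  shows "((\<lambda>y. sun_pan_mixed (Suc m) r s t x y (1 - x - y)) has_field_derivative
           - s * sun_pan_mixed m r (s - 1) t x y (1 - x - y)) (at y)"
proof -
  let ?z = "1 - x - y"
  have c: "((\<lambda>y. x) has_field_derivative 0) (at y)" for x :: complex by (rule DERIV_const)
  have i: "((\<lambda>y. y) has_field_derivative 1) (at y)" by (rule DERIV_ident)
  have z: "((\<lambda>y. 1 - x - y) has_field_derivative -1) (at y)" by (auto intro!: derivative_eq_intros)
  note d1 = binom_conv_has_field_derivative [OF appell_seq_eulpoly appell_seq_eulpoly c i, of m s t]
  note d2 = binom_conv_has_field_derivative [OF appell_seq_bernpoly appell_seq_eulpoly i z, of "Suc m" t r]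
  note d3 = binom_conv_has_field_derivative [OF appell_seq_eulpoly appell_seq_bernpoly z c, of "Suc m" r s]
  have D: "((\<lambda>y. sun_pan_mixed (Suc m) r s t x y (1 - x - y)) has_field_derivative
     r / 2 * (0 * t * binom_conv eulpoly eulpoly m s (t - 1) x y - 1 * s * binom_conv eulpoly eulpoly m (s - 1) t x y)
      + (1 * r * binom_conv bernpoly eulpoly (Suc m) t (r - 1) y ?z
         - (-1) * t * binom_conv bernpoly eulpoly (Suc m) (t - 1) r y ?z)
      - ((-1) * s * binom_conv eulpoly bernpoly (Suc m) r (s - 1) ?z x
         - 0 * r * binom_conv eulpoly bernpoly (Suc m) (r - 1) s ?z x)) (at y)"
    unfolding sun_pan_mixed_def by (intro DERIV_add DERIV_diff DERIV_cmult d1 d2 d3)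
  have "t + r - of_nat (Suc m) = - s"
    using assms by (simp add: algebra_simps)
  with binom_conv_pascal [of t bernpoly eulpoly "Suc m" r y ?z]
  have pascal: "t * binom_conv bernpoly eulpoly (Suc m) (t - 1) r y ?z + r * binom_conv bernpoly eulpoly (Suc m) t (r - 1) y ?z
      = - s * binom_conv bernpoly eulpoly (Suc m) t r y ?z"
    by simp
  have "r / 2 * (0 * t * binom_conv eulpoly eulpoly m s (t - 1) x y - 1 * s * binom_conv eulpoly eulpoly m (s - 1) t x y)
      + (1 * r * binom_conv bernpoly eulpoly (Suc m) t (r - 1) y ?z
         - (-1) * t * binom_conv bernpoly eulpoly (Suc m) (t - 1) r y ?z)
      - ((-1) * s * binom_conv eulpoly bernpoly (Suc m) r (s - 1) ?z x
         - 0 * r * binom_conv eulpoly bernpoly (Suc m) (r - 1) s ?z x)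
    = - s * (r / 2 * binom_conv eulpoly eulpoly m (s - 1) t x y - binom_conv eulpoly bernpoly (Suc m) r (s - 1) ?z x)
      + (t * binom_conv bernpoly eulpoly (Suc m) (t - 1) r y ?z + r * binom_conv bernpoly eulpoly (Suc m) t (r - 1) y ?z)"
    by (simp add: algebra_simps)
  also have "\<dots> = - s * sun_pan_mixed m r (s - 1) t x y ?z"
    unfolding pascal by (simp add: sun_pan_mixed_def algebra_simps)
  finally show ?thesis using D by simp
qed

lemma sun_pan_mixed_has_field_derivative_x:
  assumes "r + s + t = of_nat (Suc m)"
  shows "((\<lambda>x. sun_pan_mixed (Suc m) r s t x y (1 - x - y)) has_field_derivative
           t * sun_pan_mixed m r s (t - 1) x y (1 - x - y)) (at x)"
proof -
  let ?z = "1 - x - y"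
  have c: "((\<lambda>x. y) has_field_derivative 0) (at x)" for y :: complex by (rule DERIV_const)
  have i: "((\<lambda>x. x) has_field_derivative 1) (at x)" by (rule DERIV_ident)
  have z: "((\<lambda>x. 1 - x - y) has_field_derivative -1) (at x)" by (auto intro!: derivative_eq_intros)
  note d1 = binom_conv_has_field_derivative [OF appell_seq_eulpoly appell_seq_eulpoly i c, of m s t]
  note d2 = binom_conv_has_field_derivative [OF appell_seq_bernpoly appell_seq_eulpoly c z, of "Suc m" t r]
  note d3 = binom_conv_has_field_derivative [OF appell_seq_eulpoly appell_seq_bernpoly z i, of "Suc m" r s]
  have D: "((\<lambda>x. sun_pan_mixed (Suc m) r s t x y (1 - x - y)) has_field_derivative
     r / 2 * (1 * t * binom_conv eulpoly eulpoly m s (t - 1) x y - 0 * s * binom_conv eulpoly eulpoly m (s - 1) t x y)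
      + (0 * r * binom_conv bernpoly eulpoly (Suc m) t (r - 1) y ?z
         - (-1) * t * binom_conv bernpoly eulpoly (Suc m) (t - 1) r y ?z)
      - ((-1) * s * binom_conv eulpoly bernpoly (Suc m) r (s - 1) ?z x
         - 1 * r * binom_conv eulpoly bernpoly (Suc m) (r - 1) s ?z x)) (at x)"
    unfolding sun_pan_mixed_def by (intro DERIV_add DERIV_diff DERIV_cmult d1 d2 d3)
  have "r + s - of_nat (Suc m) = - t"
    using assms by (simp add: algebra_simps)
  with binom_conv_pascal [of r eulpoly bernpoly "Suc m" s ?z x]
  have pascal: "r * binom_conv eulpoly bernpoly (Suc m) (r - 1) s ?z x + s * binom_conv eulpoly bernpoly (Suc m) r (s - 1) ?z x
      = - t * binom_conv eulpoly bernpoly (Suc m) r s ?z x"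
    by simp
  have "r / 2 * (1 * t * binom_conv eulpoly eulpoly m s (t - 1) x y - 0 * s * binom_conv eulpoly eulpoly m (s - 1) t x y)
      + (0 * r * binom_conv bernpoly eulpoly (Suc m) t (r - 1) y ?z
         - (-1) * t * binom_conv bernpoly eulpoly (Suc m) (t - 1) r y ?z)
      - ((-1) * s * binom_conv eulpoly bernpoly (Suc m) r (s - 1) ?z x
         - 1 * r * binom_conv eulpoly bernpoly (Suc m) (r - 1) s ?z x)
    = t * (r / 2 * binom_conv eulpoly eulpoly m s (t - 1) x y + binom_conv bernpoly eulpoly (Suc m) (t - 1) r y ?z)
      + (r * binom_conv eulpoly bernpoly (Suc m) (r - 1) s ?z x + s * binom_conv eulpoly bernpoly (Suc m) r (s - 1) ?z x)"
    by (simp add: algebra_simps)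
  also have "\<dots> = t * sun_pan_mixed m r s (t - 1) x y ?z"
    unfolding pascal by (simp add: sun_pan_mixed_def algebra_simps)
  finally show ?thesis using D by simp
qed

lemma eul_conv_at_0_1_plus_at_0_0:
  "binom_conv eulpoly eulpoly m s t 0 1 + binom_conv eulpoly eulpoly m s t 0 0 = 2 * (t gchoose m) * eulpoly m 0"
proof -
  have "binom_conv eulpoly eulpoly m s t 0 1 + binom_conv eulpoly eulpoly m s t 0 0
      = (\<Sum>k\<le>m. (-1) ^ k * (s gchoose k) * (t gchoose (m - k)) * eulpoly (m - k) 0 * (eulpoly k 1 + eulpoly k 0))"
    unfolding binom_conv_def sum.distrib [symmetric] by (simp add: algebra_simps)
  also have "\<dots> = (\<Sum>k\<le>m. if k = 0 then 2 * (t gchoose m) * eulpoly m 0 else 0)"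
    by (rule sum.cong) (simp_all add: eulpoly_at_1_plus_at_0)
  finally show ?thesis by simp
qed

lemma bern_eul_conv_at_1_0_plus_at_0_1:
  "binom_conv bernpoly eulpoly (Suc m) t r 1 0 + binom_conv bernpoly eulpoly (Suc m) t r 0 1
   = 2 * (r gchoose Suc m) * bern (Suc m) + (-1) ^ m * (t gchoose m) * r * eulpoly m 0"
proof -
  have "binom_conv bernpoly eulpoly (Suc m) t r 1 0 + binom_conv bernpoly eulpoly (Suc m) t r 0 1
      = (\<Sum>k\<le>Suc m. (if k = 0 then 2 * (r gchoose Suc m) * bern (Suc m) else 0)
          + (if k = m then (-1) ^ m * (t gchoose m) * r * eulpoly m 0 else 0))"
    unfolding binom_conv_def sum.distrib [symmetric]
  proof (rule sum.cong [OF refl])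
    fix k assume "k \<in> {..Suc m}"
    then have "Suc m - k = 1 \<longleftrightarrow> k = m" by auto
    then have "bernpoly (Suc m - k) 1 = bern (Suc m - k) + (if k = m then 1 else 0)"
      by (simp add: bernpoly_at_1)
    then have "(-1) ^ k * (t gchoose k) * (r gchoose (Suc m - k)) * bernpoly (Suc m - k) 1 * eulpoly k 0 +
          (-1) ^ k * (t gchoose k) * (r gchoose (Suc m - k)) * bernpoly (Suc m - k) 0 * eulpoly k 1
        = (-1) ^ k * (t gchoose k) * (r gchoose (Suc m - k)) * (bern (Suc m - k) * (eulpoly k 1 + eulpoly k 0)
           + (if k = m then eulpoly k 0 else 0))"
      unfolding bernpoly_at_0 by (simp add: algebra_simps)
    also have "\<dots> = (if k = 0 then 2 * (r gchoose Suc m) * bern (Suc m) else 0)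
          + (if k = m then (-1) ^ m * (t gchoose m) * r * eulpoly m 0 else 0)"
      by (auto simp: eulpoly_at_1_plus_at_0 algebra_simps)
    finally show "(-1) ^ k * (t gchoose k) * (r gchoose (Suc m - k)) * bernpoly (Suc m - k) 1 * eulpoly k 0 +
          (-1) ^ k * (t gchoose k) * (r gchoose (Suc m - k)) * bernpoly (Suc m - k) 0 * eulpoly k 1
        = (if k = 0 then 2 * (r gchoose Suc m) * bern (Suc m) else 0)
          + (if k = m then (-1) ^ m * (t gchoose m) * r * eulpoly m 0 else 0)" .
  qed
  also have "\<dots> = 2 * (r gchoose Suc m) * bern (Suc m) + (-1) ^ m * (t gchoose m) * r * eulpoly m 0"
    by (simp only: sum.distrib sum.delta finite_atMost) simp
  finally show ?thesis .
qed

lemma eul_bern_conv_at_0_0_plus_at_1_0: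
  "binom_conv eulpoly bernpoly (Suc m) r s 0 0 + binom_conv eulpoly bernpoly (Suc m) r s 1 0
   = 2 * (-1) ^ Suc m * (r gchoose Suc m) * bern (Suc m)"
proof -
  have "binom_conv eulpoly bernpoly (Suc m) r s 0 0 + binom_conv eulpoly bernpoly (Suc m) r s 1 0
      = (\<Sum>k\<le>Suc m. (-1) ^ k * (r gchoose k) * (s gchoose (Suc m - k))
          * (eulpoly (Suc m - k) 1 + eulpoly (Suc m - k) 0) * bernpoly k 0)"
    unfolding binom_conv_def sum.distrib [symmetric] by (simp add: algebra_simps)
  also have "\<dots> = (\<Sum>k\<le>Suc m. if k = Suc m then 2 * (-1) ^ Suc m * (r gchoose Suc m) * bern (Suc m) else 0)"
    by (rule sum.cong) (auto simp: eulpoly_at_1_plus_at_0 bernpoly_at_0)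
  finally show ?thesis by simp
qed

lemma sun_pan_mixed_at_0_1_0:
  "sun_pan_mixed (Suc m) r s t 0 1 0 = - sun_pan_mixed (Suc m) r s t 0 0 1"
proof -
  have "sun_pan_mixed (Suc m) r s t 0 1 0 + sun_pan_mixed (Suc m) r s t 0 0 1
      = r / 2 * (binom_conv eulpoly eulpoly (Suc m) s t 0 1 + binom_conv eulpoly eulpoly (Suc m) s t 0 0)
        + (binom_conv bernpoly eulpoly (Suc (Suc m)) t r 1 0 + binom_conv bernpoly eulpoly (Suc (Suc m)) t r 0 1)
        - (binom_conv eulpoly bernpoly (Suc (Suc m)) r s 0 0 + binom_conv eulpoly bernpoly (Suc (Suc m)) r s 1 0)"
    unfolding sun_pan_mixed_def by (simp add: algebra_simps)
  also have "\<dots> = r * (t gchoose Suc m) * ((-1) ^ Suc m * eulpoly (Suc m) 0 + eulpoly (Suc m) 0)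
      - 2 * (r gchoose Suc (Suc m)) * ((-1) ^ Suc (Suc m) * bern (Suc (Suc m)) - bern (Suc (Suc m)))"
    unfolding eul_conv_at_0_1_plus_at_0_0 bern_eul_conv_at_1_0_plus_at_0_1 eul_bern_conv_at_0_0_plus_at_1_0
    by (simp add: algebra_simps)
  also have "\<dots> = 0"
  proof -
    have A: "(-1) ^ Suc m * eulpoly (Suc m) 0 + eulpoly (Suc m) 0 = 0"
      using eulpoly_at_0_reflect [of "Suc m"] by simp
    have B: "(-1) ^ Suc (Suc m) * bern (Suc (Suc m)) - bern (Suc (Suc m)) = 0"
      using bern_reflect [of "Suc (Suc m)"] by simp
    show ?thesis by (simp only: A B mult_zero_right diff_self)
  qed
  finally show ?thesis by (simp add: eq_neg_iff_add_eq_0)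
qed

lemma sun_pan_mixed_constant:
  assumes IH: "\<And>r s t x y z. r + s + t = of_nat m \<Longrightarrow> x + y + z = 1 \<Longrightarrow> sun_pan_mixed m r s t x y z = 0"
    and "r + s + t = of_nat (Suc m)" and "x + y + z = 1"
  shows "sun_pan_mixed (Suc m) r s t x y z = sun_pan_mixed (Suc m) r s t 0 0 1"
proof -
  let ?f = "\<lambda>x y. sun_pan_mixed (Suc m) r s t x y (1 - x - y)"
  have along_y: "?f x y = ?f x y'" for x y y'
  proof (rule has_field_derivative_0_imp_eq [where g = "?f x"])
    fix y
    have "sun_pan_mixed m r (s - 1) t x y (1 - x - y) = 0"
      by (rule IH) (use assms(2) in \<open>simp_all add: algebra_simps\<close>)
    then show "(?f x has_field_derivative 0) (at y)"
      using sun_pan_mixed_has_field_derivative_y [OF assms(2), of x y] by simp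
  qed
  have along_x: "?f x y = ?f x' y" for x x' y
  proof (rule has_field_derivative_0_imp_eq [where g = "\<lambda>x. ?f x y"])
    fix x
    have "sun_pan_mixed m r s (t - 1) x y (1 - x - y) = 0"
      by (rule IH) (use assms(2) in \<open>simp_all add: algebra_simps\<close>)
    then show "((\<lambda>x. ?f x y) has_field_derivative 0) (at x)"
      using sun_pan_mixed_has_field_derivative_x [OF assms(2), of y x] by simp
  qed
  have "z = 1 - x - y" using assms(3) by (simp add: algebra_simps)
  then show ?thesis
    using along_y [of x y 0] along_x [of x 0 0] by simp
qed

theorem sun_pan_mixed_eq_0:
  "r + s + t = of_nat m \<Longrightarrow> x + y + z = 1 \<Longrightarrow> sun_pan_mixed m r s t x y z = 0"
proof (induction m arbitrary: r s t x y z)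
  case 0
  have "t = (r + s + t) - r - s" by simp
  then have t: "t = - r - s" using 0 by simp
  have z: "z = 1 - x - y" using 0 by (simp add: algebra_simps)
  show ?case
    unfolding t z sun_pan_mixed_def binom_conv_1 binom_conv_0 bernpoly_1 eulpoly_1 bernpoly_0 eulpoly_0
    by (simp add: algebra_simps diff_divide_distrib add_divide_distrib)
next
  case (Suc m)
  have const: "sun_pan_mixed (Suc m) r s t x y z = sun_pan_mixed (Suc m) r s t 0 0 1"
    if "x + y + z = 1" for x y z
    using Suc.IH Suc.prems(1) that by (rule sun_pan_mixed_constant)
  have "sun_pan_mixed (Suc m) r s t 0 0 1 = 0"
    using sun_pan_mixed_at_0_1_0 [of m r s t] const [of 0 1 0] by simp
  with const [OF Suc.prems(2)] show ?case by simp
qed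




lemma bernpoly_eulpoly_identity:
  fixes n :: nat and x y z :: complex
  assumes "n \<ge> 1" and "x + y + z = 1"
  shows "(\<Sum>k\<le>n. of_nat ((n + 1) choose k) * ((-1) ^ n * bernpoly k x - bernpoly k y) * eulpoly (n - k) z)
           = of_nat (n + 1) / 2 * (\<Sum>l\<le>n - 1. (-1) ^ l * eulpoly l x * eulpoly (n - 1 - l) y)"
proof -
  obtain p where n: "n = Suc p" using assms(1) by (cases n) auto
  have "sun_pan_mixed p (of_nat (n + 1)) (-1) (-1) x y z = 0"
    using assms(2) by (intro sun_pan_mixed_eq_0) (simp_all add: n)
  then have E: "of_nat (n + 1) / 2 * (\<Sum>l\<le>n - 1. (-1) ^ l * eulpoly l x * eulpoly (n - 1 - l) y)
      + (\<Sum>k\<le>n. of_nat ((n + 1) choose k) * bernpoly k y * eulpoly (n - k) z)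
      - (-1) ^ n * (\<Sum>k\<le>n. of_nat ((n + 1) choose k) * bernpoly k x * eulpoly (n - k) z) = 0"
    unfolding sun_pan_mixed_def n [symmetric] binom_conv_minus_one_minus_one
      binom_conv_minus_one_of_nat binom_conv_of_nat_minus_one
    by (simp add: n mult.commute mult.left_commute)
  have "(\<Sum>k\<le>n. of_nat ((n + 1) choose k) * ((-1) ^ n * bernpoly k x - bernpoly k y) * eulpoly (n - k) z)
      = (-1) ^ n * (\<Sum>k\<le>n. of_nat ((n + 1) choose k) * bernpoly k x * eulpoly (n - k) z)
        - (\<Sum>k\<le>n. of_nat ((n + 1) choose k) * bernpoly k y * eulpoly (n - k) z)"
    by (simp add: sum_subtractf sum_distrib_left algebra_simps)
  also have "\<dots> = of_nat (n + 1) / 2 * (\<Sum>l\<le>n - 1. (-1) ^ l * eulpoly l x * eulpoly (n - 1 - l) y)"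
    using E by (rule diff_eq_of_add_diff_eq_0)
  finally show ?thesis .
qed

lemma sun_pan_mixed_has_field_derivative_at_0:
  assumes n: "n = Suc p"
  shows "((\<lambda>r. sun_pan_mixed p r (of_nat n - r) (-1) x y z) has_field_derivative
      1/2 * binom_conv eulpoly eulpoly p (of_nat n) (-1) x y
      - (\<Sum>k=1..n. (-1) ^ k * bernpoly k y / of_nat k * eulpoly (n - k) z)
      + (\<Sum>k=1..n. of_nat (n choose k) * bernpoly k x / of_nat k * eulpoly (n - k) z)
      + harm n * eulpoly n z) (at 0)"
proof -
  have "((\<lambda>r. of_nat n - r) has_field_derivative -1) (at 0)"
    by (auto intro!: derivative_eq_intros)
  then obtain G' where G: "((\<lambda>r. binom_conv eulpoly eulpoly p (of_nat n - r) (-1) x y) has_field_derivative G') (at 0)"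
    using binom_conv_has_field_derivative_param [OF _ DERIV_const] by blast
  have "(\<Sum>k=1..n. of_nat (n choose (n - k)) * bernpoly k x / of_nat k * eulpoly (n - k) z)
      = (\<Sum>k=1..n. of_nat (n choose k) * bernpoly k x / of_nat k * eulpoly (n - k) z)"
    by (intro sum.cong) (simp_all flip: binomial_symmetric)
  then show ?thesis
    unfolding sun_pan_mixed_def n [symmetric]
    by (intro DERIV_cong [OF DERIV_diff [OF DERIV_add [OF DERIV_mult' [OF DERIV_cdivide [OF DERIV_ident] G]
          binom_conv_minus_one_left_has_field_derivative_at_0]
          binom_conv_complementary_has_field_derivative_at_0 [OF order_refl]]]) simp
qed

lemma bernpoly_eulpoly_harmonic_identity:
  fixes n :: nat and x y z :: complex
  assumes "n \<ge> 1" and "x + y + z = 1"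
  shows "(\<Sum>k=1..n. of_nat (n choose k) * bernpoly k x / of_nat k * eulpoly (n - k) z)
           - (\<Sum>k=1..n. (-1) ^ k * bernpoly k y / of_nat k * eulpoly (n - k) z)
         = (-1) ^ n / 2 * (\<Sum>l\<le>n - 1. of_nat (n choose l) * eulpoly l y * eulpoly (n - 1 - l) x)
           - harm n * eulpoly n z"
proof -
  obtain p where n: "n = Suc p" using assms(1) by (cases n) auto
  have "sun_pan_mixed p r (of_nat n - r) (-1) x y z = 0" for r
    using assms(2) by (intro sun_pan_mixed_eq_0) (simp_all add: n)
  with sun_pan_mixed_has_field_derivative_at_0 [OF n]
  have "1/2 * binom_conv eulpoly eulpoly p (of_nat n) (-1) x y
      - (\<Sum>k=1..n. (-1) ^ k * bernpoly k y / of_nat k * eulpoly (n - k) z)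
      + (\<Sum>k=1..n. of_nat (n choose k) * bernpoly k x / of_nat k * eulpoly (n - k) z)
      + harm n * eulpoly n z = 0"
    by (rule has_field_derivative_vanishing)
  moreover have "binom_conv eulpoly eulpoly p (of_nat n) (-1) x y
      = - ((-1) ^ n * (\<Sum>l\<le>n - 1. of_nat (n choose l) * eulpoly l y * eulpoly (n - 1 - l) x))"
  proof -
    have "n - 1 = p" "(-1) ^ p = - ((-1) ^ n :: complex)" using n by simp_all
    then show ?thesis
      unfolding binom_conv_of_nat_minus_one by (simp add: mult.commute mult.left_commute)
  qed
  ultimately show ?thesis
    by (simp add: algebra_simps)
qed

lemma sun_pan_bern_has_field_derivative_at_0:
  "((\<lambda>r. sun_pan_bern n r (of_nat (n + 1) - r) (-1) x y z) has_field_derivative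
      bern_conv n (of_nat (n + 1)) (-1) x y - bernpoly n z
      - of_nat (n + 1) * (\<Sum>k=1..n. (-1) ^ k * bernpoly k y / of_nat k * bernpoly (n - k) z)
      + (\<Sum>k=1..n. of_nat ((n + 1) choose (n - k)) * bernpoly k x / of_nat k * bernpoly (n - k) z)
      + of_nat (n + 1) * (harm (n + 1) - 1) * bernpoly n z) (at 0)"
proof -
  have "((\<lambda>r. of_nat (n + 1) - r) has_field_derivative -1) (at 0)"
    by (auto intro!: derivative_eq_intros)
  then obtain G' where G: "((\<lambda>r. bern_conv n (of_nat (n + 1) - r) (-1) x y) has_field_derivative G') (at 0)"
    using binom_conv_has_field_derivative_param [OF _ DERIV_const] by blast
  show ?thesis
    unfolding sun_pan_bern_def
    by (rule DERIV_cong [OF DERIV_add [OF DERIV_add [OF DERIV_mult' [OF DERIV_ident G]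
          DERIV_mult' [OF _ binom_conv_minus_one_left_has_field_derivative_at_0]]
          DERIV_cmult [OF binom_conv_complementary_has_field_derivative_at_0 [of n "n + 1"]]]])
       (auto intro!: derivative_eq_intros simp: binom_conv_minus_one_0 harm_Suc algebra_simps)
qed

lemma bernpoly_harmonic_identity:
  fixes n :: nat and x y z :: complex
  assumes "n \<ge> 1" and "x + y + z = 1"
  shows "(-1) ^ n * (\<Sum>k\<le>n. of_nat ((n + 1) choose k) * bernpoly (n - k) x * bernpoly k y)
           + (\<Sum>k\<le>n - 1. of_nat ((n + 1) choose k) * bernpoly (n - k) x / of_nat (n - k) * bernpoly k z)
         = of_nat (n + 1) * (\<Sum>k=1..n. (-1) ^ k * bernpoly k y / of_nat k * bernpoly (n - k) z)
           + (1 - harm n) * of_nat (n + 1) * bernpoly n z"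
proof -
  have "sun_pan_bern n r (of_nat (n + 1) - r) (-1) x y z = 0" for r
    using assms(2) by (intro sun_pan_bern_eq_0) simp_all
  with sun_pan_bern_has_field_derivative_at_0
  have D: "bern_conv n (of_nat (n + 1)) (-1) x y - bernpoly n z
      - of_nat (n + 1) * (\<Sum>k=1..n. (-1) ^ k * bernpoly k y / of_nat k * bernpoly (n - k) z)
      + (\<Sum>k=1..n. of_nat ((n + 1) choose (n - k)) * bernpoly k x / of_nat k * bernpoly (n - k) z)
      + of_nat (n + 1) * (harm (n + 1) - 1) * bernpoly n z = 0"
    by (rule has_field_derivative_vanishing)
  have reindex: "(\<Sum>k=1..n. of_nat ((n + 1) choose (n - k)) * bernpoly k x / of_nat k * bernpoly (n - k) z)
      = (\<Sum>k\<le>n - 1. of_nat ((n + 1) choose k) * bernpoly (n - k) x / of_nat (n - k) * bernpoly k z)"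
    using assms(1) by (intro sum.reindex_bij_witness [of _ "\<lambda>k. n - k" "\<lambda>k. n - k"]) auto
  have harm: "of_nat (n + 1) * (harm (n + 1) - 1) = (of_nat (n + 1) * harm n + 1 - of_nat (n + 1) :: complex)"
  proof -
    have "1 + of_nat n \<noteq> (0 :: complex)"
      by (metis add.commute of_nat_Suc of_nat_neq_0)
    then show ?thesis by (simp add: harm_Suc field_simps)
  qed
  from D show ?thesis
    unfolding binom_conv_of_nat_minus_one reindex harm by (simp add: algebra_simps)
qed

theorem corollary1p4:
  fixes n :: nat and x y z :: complex
  assumes "n \<ge> 1" and "x + y + z = 1"
  shows "((\<Sum>k\<le>n. of_nat ((n + 1) choose k) * ((-1) ^ n * bernpoly k x - bernpoly k y) * eulpoly (n - k) z)
           = of_nat (n + 1) / 2 * (\<Sum>l\<le>n - 1. (-1) ^ l * eulpoly l x * eulpoly (n - 1 - l) y))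
     \<and> ((\<Sum>k=1..n. of_nat (n choose k) * bernpoly k x / of_nat k * eulpoly (n - k) z)
           - (\<Sum>k=1..n. (-1) ^ k * bernpoly k y / of_nat k * eulpoly (n - k) z)
         = (-1) ^ n / 2 * (\<Sum>l\<le>n - 1. of_nat (n choose l) * eulpoly l y * eulpoly (n - 1 - l) x)
           - harm n * eulpoly n z)
     \<and> ((-1) ^ n * (\<Sum>k\<le>n. of_nat ((n + 1) choose k) * bernpoly (n - k) x * bernpoly k y)
           + (\<Sum>k\<le>n - 1. of_nat ((n + 1) choose k) * bernpoly (n - k) x / of_nat (n - k) * bernpoly k z)
         = of_nat (n + 1) * (\<Sum>k=1..n. (-1) ^ k * bernpoly k y / of_nat k * bernpoly (n - k) z)
           + (1 - harm n) * of_nat (n + 1) * bernpoly n z)"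
  using bernpoly_eulpoly_identity [OF assms] bernpoly_eulpoly_harmonic_identity [OF assms]
    bernpoly_harmonic_identity [OF assms]
  by blast

end
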